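(* Let $\mathcal{X}$ be an input set, $\mathcal{Y}$ an output set, and $\mathcal{F}$ a set of models $f:\mathcal{X}\to\mathcal{Y}$. Let $n,m\ge 1$. For $i=1,\dots,n$ let $t_i=(p_i,S_i,\ell_i)$ be a learning task, where $p_i$ is a probability distribution on $\mathcal{X}\times\mathcal{Y}$, $\ell_i:\mathcal{Y}\times\mathcal{Y}\to[0,1]$ is a loss function, and $S_i=\{(x_{i,1},y_{i,1}),\dots,(x_{i,m},y_{i,m})\}$ is a sample of size $m$ drawn i.i.d. from $p_i$, the samples $S_1,\dots,S_n$ being drawn independently of each other. Let $\mathcal{E}$ be a set (of "global parameters") and let $l:\mathcal{E}\to\mathbb{N}$ be the length function of a prefix-free encoding of $\mathcal{E}$ (the meta-encoder). For each $E\in\mathcal{E}$, let $l_E:\bigcup_{k=1}^\infty\mathcal{F}^k\to\mathbb{N}$ be the length function of a prefix-free encoding of $\bigcup_{k=1}^\infty\mathcal{F}^k$ (the multi-task encoder given $E$). Then for any $\delta>0$, with probability at least $1-\delta$ over the sampling of $S_1,\dots,S_n$, the following holds simultaneously for all $E\in\mathcal{E}$ and all $f_1,\dots,f_n\in\mathcal{F}$: $$\mathcal{R}(f_1,\dots,f_n)\le \widehat{\mathcal{R}}(f_1,\dots,f_n)+\sqrt{\frac{\big(l(E)+l_E(f_1,\dots,f_n)\big)\log 2+\log\frac{1}{\delta}}{2mn}}.$$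
   Context: A (prefix-free) encoding of a set $\mathcal{Z}$ is a map $C:\mathcal{Z}\to\{0,1\}^*$ such that for all $z\neq z'$ in $\mathcal{Z}$, $C(z)$ is not a prefix of $C(z')$; its length function is $z\mapsto$ length of the string $C(z)$. The multi-task risk is $\mathcal{R}(f_1,\dots,f_n)=\frac1n\sum_{i=1}^n \mathbb{E}_{(x,y)\sim p_i}\ell_i(y,f_i(x))$ and the multi-task empirical risk is $\widehat{\mathcal{R}}(f_1,\dots,f_n)=\frac{1}{mn}\sum_{i=1}^n\sum_{j=1}^m \ell_i(y_{i,j},f_i(x_{i,j}))$. *)

theory Defs
  imports "HOL-Probability.Probability" "HOL-Library.Sublist"
begin

definition prefix_free_encoding :: "('z \<Rightarrow> bool list) \<Rightarrow> 'z set \<Rightarrow> bool" where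
  "prefix_free_encoding C Z \<longleftrightarrow>
     (\<forall>z\<in>Z. \<forall>z'\<in>Z. z \<noteq> z' \<longrightarrow> \<not> prefix (C z) (C z'))"

definition is_prefix_free_length :: "('z \<Rightarrow> nat) \<Rightarrow> 'z set \<Rightarrow> bool" where
  "is_prefix_free_length L Z \<longleftrightarrow>
     (\<exists>C. prefix_free_encoding C Z \<and> (\<forall>z\<in>Z. L z = length (C z)))"

text \<open>Finite nonempty tuples of models, i.e. the union over k >= 1 of F^k, as lists.\<close>
definition tuples_of :: "'a set \<Rightarrow> 'a list set" where
  "tuples_of F = {fs. fs \<noteq> [] \<and> set fs \<subseteq> F}"

definition mt_risk ::
  "nat \<Rightarrow> (nat \<Rightarrow> ('x \<times> 'y) measure) \<Rightarrow> (nat \<Rightarrow> 'y \<Rightarrow> 'y \<Rightarrow> real)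
   \<Rightarrow> (nat \<Rightarrow> 'x \<Rightarrow> 'y) \<Rightarrow> real" where
  "mt_risk n p loss fs =
     (1 / real n) * (\<Sum>i<n. integral\<^sup>L (p i) (\<lambda>(x, y). loss i y (fs i x)))"

text \<open>Multi-task empirical risk; the sample is S (i,j) = (x_{i,j}, y_{i,j}).\<close>
definition mt_emp_risk ::
  "nat \<Rightarrow> nat \<Rightarrow> (nat \<Rightarrow> 'y \<Rightarrow> 'y \<Rightarrow> real) \<Rightarrow> (nat \<times> nat \<Rightarrow> 'x \<times> 'y)
   \<Rightarrow> (nat \<Rightarrow> 'x \<Rightarrow> 'y) \<Rightarrow> real" where
  "mt_emp_risk n m loss S fs =
     (1 / (real m * real n)) *
       (\<Sum>i<n. \<Sum>j<m. loss i (snd (S (i, j))) (fs i (fst (S (i, j)))))"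

definition sample_measure ::
  "nat \<Rightarrow> nat \<Rightarrow> (nat \<Rightarrow> ('x \<times> 'y) measure) \<Rightarrow> (nat \<times> nat \<Rightarrow> 'x \<times> 'y) measure" where
  "sample_measure n m p = (\<Pi>\<^sub>M ij \<in> {..<n} \<times> {..<m}. p (fst ij))"

end

theory Submission
  imports Defs
begin

text \<open>For a fixed tuple of models the \<open>m n\<close> losses on the sample are independent and take values
  in \<open>[0, 1]\<close>, so by Hoeffding's inequality the risk exceeds the empirical risk by
  \<open>sqrt (ln (1 / w) / (2 m n))\<close> with probability at most \<open>w\<close>. Appending the code word of the
  models given \<open>E\<close> to the code word of \<open>E\<close> is a prefix-free code on the pairs \<open>(E, f)\<close>, so by
  Kraft's inequality the confidences \<open>w = 2 powr -(l E + l\<^sub>E f) * \<delta>\<close> add up to at most \<open>\<delta>\<close>, and a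
  union bound over the countably many pairs gives the theorem.\<close>

lemma prefix_free_encodingD:
  assumes "prefix_free_encoding C Z" and "z \<in> Z" and "z' \<in> Z" and "prefix (C z) (C z')"
  shows "z = z'"
  using assms unfolding prefix_free_encoding_def by blast

lemma prefix_free_encoding_inj_on:
  assumes "prefix_free_encoding C Z"
  shows "inj_on C Z"
  using assms unfolding prefix_free_encoding_def inj_on_def by fastforce

lemma prefix_free_encoding_vimage_Cons:
  assumes "prefix_free_encoding (\<lambda>w. w) W"
  shows "prefix_free_encoding (\<lambda>w. w) (Cons b -` W)"
  using assms unfolding prefix_free_encoding_def by (metis Cons_prefix_Cons list.inject vimageE)

lemma sum_half_pow_length_split:
  fixes W :: "bool list set"
  assumes "finite W" and "[] \<notin> W"
  shows "(\<Sum>w\<in>W. (1/2::real) ^ length w)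
       = (\<Sum>w\<in>Cons True -` W. (1/2::real) ^ length w) / 2
       + (\<Sum>w\<in>Cons False -` W. (1/2::real) ^ length w) / 2"
proof -
  have "w \<in> Cons True ` (Cons True -` W) \<union> Cons False ` (Cons False -` W)" if "w \<in> W" for w
    using assms(2) that by (cases w) auto
  then have W: "Cons True ` (Cons True -` W) \<union> Cons False ` (Cons False -` W) = W"
    by blast
  have sum_Cons_images: "(\<Sum>w\<in>Cons True ` A \<union> Cons False ` B. (1/2::real) ^ length w)
      = (\<Sum>w\<in>A. (1/2::real) ^ length w) / 2 + (\<Sum>w\<in>B. (1/2::real) ^ length w) / 2"
    if "finite A" and "finite B" for A B
    using that by (subst sum.union_disjoint) (auto simp: sum.reindex sum_divide_distrib)
  have fin: "finite (Cons b -` W)" for b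
    using assms(1) by (simp add: finite_vimageI)
  from sum_Cons_images[OF fin[of True] fin[of False]] show ?thesis
    unfolding W .
qed

lemma kraft_inequality_bounded_length:
  fixes W :: "bool list set"
  assumes "finite W" and "prefix_free_encoding (\<lambda>w. w) W" and "\<forall>w\<in>W. length w \<le> k"
  shows "(\<Sum>w\<in>W. (1/2::real) ^ length w) \<le> 1"
  using assms
proof (induction k arbitrary: W)
  case 0
  then have "W \<subseteq> {[]}" by auto
  then have "W = {} \<or> W = {[]}" by (rule subset_singletonD)
  then show ?case by auto
next
  case (Suc k)
  show ?case
  proof (cases "[] \<in> W")
    case True
    have "w = []" if "w \<in> W" for w
      using prefix_free_encodingD[OF Suc.prems(2) True that] by simp
    with True have "W = {[]}" by blast
    then show ?thesis by simp
  next
    case False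
    have IH: "(\<Sum>w\<in>Cons b -` W. (1/2::real) ^ length w) \<le> 1" for b
      using Suc.prems by (intro Suc.IH prefix_free_encoding_vimage_Cons finite_vimageI) auto
    show ?thesis
      using sum_half_pow_length_split[OF Suc.prems(1) False] IH[of True] IH[of False] by simp
  qed
qed

lemma kraft_inequality:
  assumes "is_prefix_free_length L Z" and "finite Z"
  shows "(\<Sum>z\<in>Z. (1/2::real) ^ L z) \<le> 1"
proof -
  obtain C where C: "prefix_free_encoding C Z" and L: "\<And>z. z \<in> Z \<Longrightarrow> L z = length (C z)"
    using assms(1) unfolding is_prefix_free_length_def by blast
  have "(\<Sum>z\<in>Z. (1/2::real) ^ L z) = (\<Sum>w\<in>C ` Z. (1/2) ^ length w)"
    using prefix_free_encoding_inj_on[OF C] by (simp add: sum.reindex L)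
  also have "\<dots> \<le> 1"
  proof (rule kraft_inequality_bounded_length)
    show "prefix_free_encoding (\<lambda>w. w) (C ` Z)"
      using C unfolding prefix_free_encoding_def by (metis imageE)
    show "\<forall>w\<in>C ` Z. length w \<le> Max (length ` C ` Z)"
      using assms(2) by simp
  qed (use assms(2) in simp)
  finally show ?thesis .
qed

lemma is_prefix_free_length_subset:
  assumes "is_prefix_free_length L Z" and "Z' \<subseteq> Z"
  shows "is_prefix_free_length L Z'"
proof -
  obtain C where "prefix_free_encoding C Z" and "\<forall>z\<in>Z. L z = length (C z)"
    using assms(1) unfolding is_prefix_free_length_def by blast
  with assms(2) have "prefix_free_encoding C Z'" and "\<forall>z\<in>Z'. L z = length (C z)"
    unfolding prefix_free_encoding_def by blast+
  then show ?thesis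
    unfolding is_prefix_free_length_def by blast
qed

lemma is_prefix_free_length_countable:
  assumes "is_prefix_free_length L Z"
  shows "countable Z"
proof -
  obtain C where "prefix_free_encoding C Z"
    using assms unfolding is_prefix_free_length_def by blast
  then show ?thesis
    by (rule countable_image_inj_on[OF countableI_type prefix_free_encoding_inj_on])
qed

lemma prefix_free_encoding_Sigma:
  assumes C: "prefix_free_encoding C A"
    and D: "\<And>a. a \<in> A \<Longrightarrow> prefix_free_encoding (D a) (B a)"
  shows "prefix_free_encoding (\<lambda>(a, b). C a @ D a b) (SIGMA a:A. B a)"
  unfolding prefix_free_encoding_def
proof (intro ballI impI notI)
  fix x y
  assume "x \<in> Sigma A B" "y \<in> Sigma A B" and "x \<noteq> y"
    and pre: "prefix (case x of (a, b) \<Rightarrow> C a @ D a b) (case y of (a, b) \<Rightarrow> C a @ D a b)"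
  then obtain a b a' b' where xy: "x = (a, b)" "y = (a', b')" "(a, b) \<noteq> (a', b')"
    and ab: "a \<in> A" "b \<in> B a" "a' \<in> A" "b' \<in> B a'"
    by blast
  from pre have pre': "prefix (C a @ D a b) (C a' @ D a' b')"
    unfolding xy(1,2) by simp
  then have "prefix (C a) (C a' @ D a' b')"
    by (rule append_prefixD)
  then have "prefix (C a) (C a') \<or> prefix (C a') (C a)"
    by (rule prefix_same_cases) simp
  then have "a = a'"
    using prefix_free_encodingD[OF C] ab(1,3) by metis
  with pre' have "prefix (D a b) (D a b')"
    by simp
  then have "b = b'"
    using prefix_free_encodingD[OF D[OF ab(1)] ab(2)] ab(4) \<open>a = a'\<close> by blast
  with xy(3) \<open>a = a'\<close> show False
    by blast
qed

lemma is_prefix_free_length_Sigma: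
  assumes "is_prefix_free_length L A"
    and "\<And>a. a \<in> A \<Longrightarrow> is_prefix_free_length (M a) (B a)"
  shows "is_prefix_free_length (\<lambda>(a, b). L a + M a b) (SIGMA a:A. B a)"
proof -
  obtain C where C: "prefix_free_encoding C A" "\<forall>a\<in>A. L a = length (C a)"
    using assms(1) unfolding is_prefix_free_length_def by blast
  have "\<forall>a\<in>A. \<exists>D. prefix_free_encoding D (B a) \<and> (\<forall>b\<in>B a. M a b = length (D b))"
    using assms(2) unfolding is_prefix_free_length_def by blast
  then obtain D where D: "\<forall>a\<in>A. prefix_free_encoding (D a) (B a) \<and> (\<forall>b\<in>B a. M a b = length (D a b))"
    by (rule bchoice[THEN exE])
  have "prefix_free_encoding (\<lambda>(a, b). C a @ D a b) (SIGMA a:A. B a)"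
    using D by (intro prefix_free_encoding_Sigma C(1)) blast
  moreover have "\<forall>ab\<in>SIGMA a:A. B a. (\<lambda>(a, b). L a + M a b) ab = length ((\<lambda>(a, b). C a @ D a b) ab)"
    using C(2) D by force
  ultimately show ?thesis
    unfolding is_prefix_free_length_def by blast
qed

lemma (in prob_space) prob_UN_le_of_finite_sums:
  assumes "countable I" and "\<And>i. i \<in> I \<Longrightarrow> A i \<in> events"
    and "\<And>K. finite K \<Longrightarrow> K \<subseteq> I \<Longrightarrow> (\<Sum>i\<in>K. prob (A i)) \<le> c" and "c \<ge> 0"
  shows "prob (\<Union>i\<in>I. A i) \<le> c"
proof (cases "I = {}")
  case True
  then show ?thesis using assms(4) by simp
next
  case False
  define g where "g = from_nat_into I"
  have g: "g k \<in> I" for k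
    unfolding g_def using False by (rule from_nat_into)
  define U where "U k = (\<Union>j\<in>{0..<k}. A (g j))" for k
  have U_events: "U k \<in> events" for k
    unfolding U_def using assms(2) g by blast
  have "(\<Union>i\<in>I. A i) = (\<Union>k. U k)"
    unfolding U_def UN_UN_finite_eq g_def by (rule UN_from_nat_into[OF assms(1) False])
  moreover have "(\<lambda>k. prob (U k)) \<longlonglongrightarrow> prob (\<Union>k. U k)"
  proof (rule finite_Lim_measure_incseq)
    show "incseq U"
      unfolding U_def by (intro monoI UN_mono) auto
  qed (use U_events in blast)
  moreover have "prob (U k) \<le> c" for k
  proof -
    have "prob (U k) = prob (\<Union>i\<in>g ` {0..<k}. A i)"
      by (simp add: U_def)
    also have "\<dots> \<le> (\<Sum>i\<in>g ` {0..<k}. prob (A i))"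
      using assms(2) g by (intro measure_UNION_le) auto
    also have "\<dots> \<le> c"
      using g by (intro assms(3)) auto
    finally show ?thesis .
  qed
  ultimately show ?thesis
    by (metis LIMSEQ_le_const2)
qed

lemma (in prob_space) prefix_free_union_bound:
  assumes L: "is_prefix_free_length L I" and A: "\<And>i. i \<in> I \<Longrightarrow> A i \<in> events"
    and "\<And>i. i \<in> I \<Longrightarrow> prob (A i) \<le> (1/2) ^ L i * \<delta>" and "\<delta> \<ge> 0"
  shows "\<exists>G \<in> events. prob G \<ge> 1 - \<delta> \<and> (\<forall>\<omega> \<in> G. \<forall>i \<in> I. \<omega> \<notin> A i)"
proof (intro bexI conjI ballI)
  have I: "countable I"
    using L by (rule is_prefix_free_length_countable)
  have U: "(\<Union>i\<in>I. A i) \<in> events"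
    using I A by (rule sets.countable_UN'')
  then show "space M - (\<Union>i\<in>I. A i) \<in> events"
    by (intro sets.compl_sets)
  have "prob (\<Union>i\<in>I. A i) \<le> \<delta>"
  proof (rule prob_UN_le_of_finite_sums)
    fix K assume K: "finite K" "K \<subseteq> I"
    have "(\<Sum>i\<in>K. prob (A i)) \<le> (\<Sum>i\<in>K. (1/2) ^ L i) * \<delta>"
      unfolding sum_distrib_right using K assms(3) by (intro sum_mono) auto
    also have "\<dots> \<le> 1 * \<delta>"
      using kraft_inequality[OF is_prefix_free_length_subset[OF L K(2)] K(1)] assms(4)
      by (intro mult_right_mono)
    finally show "(\<Sum>i\<in>K. prob (A i)) \<le> \<delta>" by simp
  qed (use I A assms(4) in simp_all)
  with prob_compl[OF U] show "prob (space M - (\<Union>i\<in>I. A i)) \<ge> 1 - \<delta>"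
    by simp
qed auto

lemma indep_vars_PiM_components:
  assumes "\<And>i. i \<in> I \<Longrightarrow> prob_space (M i)" and "I \<noteq> {}"
  shows "prob_space.indep_vars (PiM I M) M (\<lambda>i \<omega>. \<omega> i) I"
proof -
  interpret prob_space "PiM I M"
    using assms(1) by (rule prob_space_PiM)
  show ?thesis
  proof (subst indep_vars_iff_distr_eq_PiM')
    have "distr (PiM I M) (PiM I M) (\<lambda>\<omega>. \<lambda>i\<in>I. \<omega> i) = distr (PiM I M) (PiM I M) (\<lambda>\<omega>. \<omega>)"
      by (rule distr_cong) (auto simp: space_PiM)
    also have "\<dots> = PiM I M"
      by (rule distr_id)
    also have "\<dots> = (\<Pi>\<^sub>M i\<in>I. distr (PiM I M) (M i) (\<lambda>\<omega>. \<omega> i))"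
      by (rule PiM_cong) (auto simp: distr_PiM_component assms(1))
    finally show "distr (PiM I M) (PiM I M) (\<lambda>\<omega>. \<lambda>i\<in>I. \<omega> i) = (\<Pi>\<^sub>M i\<in>I. distr (PiM I M) (M i) (\<lambda>\<omega>. \<omega> i))" .
  qed (use assms(2) in auto)
qed

lemma Hoeffding_PiM_le:
  assumes "finite I" and "I \<noteq> {}" and "\<And>i. i \<in> I \<Longrightarrow> prob_space (M i)"
    and g: "\<And>i. i \<in> I \<Longrightarrow> g i \<in> borel_measurable (M i)"
    and "\<And>i x. i \<in> I \<Longrightarrow> x \<in> space (M i) \<Longrightarrow> g i x \<in> {0..1}" and "\<epsilon> \<ge> 0"
  shows "measure (PiM I M) {\<omega> \<in> space (PiM I M).
            (\<Sum>i\<in>I. g i (\<omega> i)) \<le> (\<Sum>i\<in>I. integral\<^sup>L (M i) (g i)) - \<epsilon>}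
         \<le> exp (-2 * \<epsilon>\<^sup>2 / card I)"
proof -
  interpret prob_space "PiM I M"
    using assms(3) by (rule prob_space_PiM)
  have expectation: "expectation (\<lambda>\<omega>. g i (\<omega> i)) = integral\<^sup>L (M i) (g i)" if "i \<in> I" for i
  proof -
    have "expectation (\<lambda>\<omega>. g i (\<omega> i)) = integral\<^sup>L (distr (PiM I M) (M i) (\<lambda>\<omega>. \<omega> i)) (g i)"
      using that g by (intro integral_distr[symmetric]) auto
    then show ?thesis
      using distr_PiM_component[of I M i, OF assms(3) that] by simp
  qed
  interpret Hoeffding_ineq "PiM I M" I "\<lambda>i \<omega>. g i (\<omega> i)" "\<lambda>_. 0" "\<lambda>_. 1"
      "\<Sum>i\<in>I. expectation (\<lambda>\<omega>. g i (\<omega> i))"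
  proof unfold_locales
    show "indep_vars (\<lambda>_. borel) (\<lambda>i \<omega>. g i (\<omega> i)) I"
      using indep_vars_PiM_components[OF assms(3,2)] g by (rule indep_vars_compose2)
    show "AE \<omega> in PiM I M. g i (\<omega> i) \<in> {0..1}" if "i \<in> I" for i
      using assms(5) that by (intro AE_I2) (auto simp: space_PiM)
  qed (use assms(1) in auto)
  have "prob {\<omega> \<in> space (PiM I M). (\<Sum>i\<in>I. g i (\<omega> i)) \<le> (\<Sum>i\<in>I. expectation (\<lambda>\<omega>. g i (\<omega> i))) - \<epsilon>}
        \<le> exp (-2 * \<epsilon>\<^sup>2 / (\<Sum>i\<in>I. (1 - 0)\<^sup>2))"
    using assms(1,2,6) by (intro Hoeffding_ineq_le) auto
  also have "(\<Sum>i\<in>I. expectation (\<lambda>\<omega>. g i (\<omega> i))) = (\<Sum>i\<in>I. integral\<^sup>L (M i) (g i))"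
    by (rule sum.cong) (simp_all add: expectation)
  finally show ?thesis
    by simp
qed

lemma prob_space_sample_measure:
  assumes "\<And>i. i < n \<Longrightarrow> prob_space (p i)"
  shows "prob_space (sample_measure n m p)"
  unfolding sample_measure_def using assms by (intro prob_space_PiM) auto

lemma measurable_sample_component:
  assumes "i < n" and "j < m"
  shows "(\<lambda>S. S (i, j)) \<in> measurable (sample_measure n m p) (p i)"
  using measurable_component_singleton[of "(i, j)" "{..<n} \<times> {..<m}" "\<lambda>ij. p (fst ij)"] assms
  unfolding sample_measure_def by simp

lemma borel_measurable_mt_emp_risk:
  assumes "\<And>i. i < n \<Longrightarrow> (\<lambda>(x, y). loss i y (fs i x)) \<in> borel_measurable (p i)"
  shows "(\<lambda>S. mt_emp_risk n m loss S fs) \<in> borel_measurable (sample_measure n m p)"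
proof -
  have "(\<lambda>S. (\<lambda>(x, y). loss i y (fs i x)) (S (i, j))) \<in> borel_measurable (sample_measure n m p)"
    if "i < n" "j < m" for i j
    using measurable_sample_component[OF that] assms[OF that(1)] by (rule measurable_compose)
  then show ?thesis
    unfolding mt_emp_risk_def
    by (intro borel_measurable_times borel_measurable_const borel_measurable_sum) (auto simp: case_prod_beta)
qed

lemma mt_risk_cong:
  assumes "\<And>i. i < n \<Longrightarrow> fs i = gs i"
  shows "mt_risk n p loss fs = mt_risk n p loss gs"
  unfolding mt_risk_def using assms by simp

lemma mt_emp_risk_cong:
  assumes "\<And>i. i < n \<Longrightarrow> fs i = gs i"
  shows "mt_emp_risk n m loss S fs = mt_emp_risk n m loss S gs"
  unfolding mt_emp_risk_def using assms by simp

lemma mt_emp_risk_eq_sum_samples: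
  "real m * real n * mt_emp_risk n m loss S fs =
     (\<Sum>ij\<in>{..<n} \<times> {..<m}. loss (fst ij) (snd (S ij)) (fs (fst ij) (fst (S ij))))"
  by (simp add: mt_emp_risk_def sum.cartesian_product case_prod_beta)

lemma mt_risk_eq_sum_samples:
  "real m * real n * mt_risk n p loss fs =
     (\<Sum>ij\<in>{..<n} \<times> {..<m}. LINT (x, y)|p (fst ij). loss (fst ij) y (fs (fst ij) x))"
  by (simp add: mt_risk_def sum.cartesian_product' sum_distrib_left)

lemma prob_mt_risk_gt_emp_risk_le:
  assumes "n \<ge> 1" and "m \<ge> 1"
    and P: "\<And>i. i < n \<Longrightarrow> prob_space (p i)"
    and "\<And>i y y'. i < n \<Longrightarrow> 0 \<le> loss i y y' \<and> loss i y y' \<le> 1"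
    and meas: "\<And>i. i < n \<Longrightarrow> (\<lambda>(x, y). loss i y (fs i x)) \<in> borel_measurable (p i)"
    and "\<epsilon> \<ge> 0"
  shows "measure (sample_measure n m p)
           {S \<in> space (sample_measure n m p). mt_risk n p loss fs > mt_emp_risk n m loss S fs + \<epsilon>}
         \<le> exp (-2 * real m * real n * \<epsilon>\<^sup>2)"
proof -
  define I where "I = {..<n} \<times> {..<m}"
  define M where "M = (\<lambda>ij::nat \<times> nat. p (fst ij))"
  define g where "g = (\<lambda>ij::nat \<times> nat. \<lambda>(x, y). loss (fst ij) y (fs (fst ij) x))"
  have sample: "sample_measure n m p = PiM I M"
    by (simp add: sample_measure_def I_def M_def)
  interpret prob_space "PiM I M"
    using prob_space_sample_measure[of n p m, OF P] by (simp add: sample)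
  have g_meas: "g ij \<in> borel_measurable (M ij)" if "ij \<in> I" for ij
    using meas that by (auto simp: I_def M_def g_def)
  have sum_g: "(\<Sum>ij\<in>I. g ij (S ij)) = real m * real n * mt_emp_risk n m loss S fs" for S
    by (simp add: mt_emp_risk_eq_sum_samples I_def g_def case_prod_beta)
  have sum_integral: "(\<Sum>ij\<in>I. integral\<^sup>L (M ij) (g ij)) = real m * real n * mt_risk n p loss fs"
    by (simp add: mt_risk_eq_sum_samples I_def M_def g_def)
  let ?Hoeffding_event = "{S \<in> space (PiM I M).
      (\<Sum>ij\<in>I. g ij (S ij)) \<le> (\<Sum>ij\<in>I. integral\<^sup>L (M ij) (g ij)) - real m * real n * \<epsilon>}"
  have "{S \<in> space (sample_measure n m p). mt_risk n p loss fs > mt_emp_risk n m loss S fs + \<epsilon>}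
      \<subseteq> ?Hoeffding_event"
  proof
    fix S
    assume "S \<in> {S \<in> space (sample_measure n m p). mt_risk n p loss fs > mt_emp_risk n m loss S fs + \<epsilon>}"
    then have S: "S \<in> space (PiM I M)" and gt: "mt_risk n p loss fs > mt_emp_risk n m loss S fs + \<epsilon>"
      by (simp_all add: sample)
    have "real m * real n * (mt_emp_risk n m loss S fs + \<epsilon>) \<le> real m * real n * mt_risk n p loss fs"
      using gt by (intro mult_left_mono) auto
    with S show "S \<in> ?Hoeffding_event"
      by (simp add: sum_g sum_integral algebra_simps)
  qed
  moreover have "?Hoeffding_event \<in> sets (PiM I M)"
  proof -
    have "(\<lambda>S. g ij (S ij)) \<in> borel_measurable (PiM I M)" if "ij \<in> I" for ij
      using measurable_component_singleton[OF that] g_meas[OF that] by (rule measurable_compose)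
    then show ?thesis
      by measurable
  qed
  ultimately have "measure (sample_measure n m p)
        {S \<in> space (sample_measure n m p). mt_risk n p loss fs > mt_emp_risk n m loss S fs + \<epsilon>}
      \<le> measure (PiM I M) ?Hoeffding_event"
    unfolding sample by (rule finite_measure_mono)
  also have "\<dots> \<le> exp (-2 * (real m * real n * \<epsilon>)\<^sup>2 / card I)"
  proof (rule Hoeffding_PiM_le)
    show "I \<noteq> {}"
      using assms(1,2) by (auto simp: I_def lessThan_empty_iff)
    show "g ij x \<in> {0..1}" if "ij \<in> I" for ij x
      using assms(4) that by (auto simp: I_def g_def split: prod.split)
  qed (use P g_meas assms(1,2,6) in \<open>auto simp: I_def M_def\<close>)
  also have "\<dots> = exp (-2 * real m * real n * \<epsilon>\<^sup>2)"
    using assms(1,2) by (simp add: I_def power2_eq_square)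
  finally show ?thesis .
qed

lemma prob_mt_risk_gt_emp_risk_sqrt_le:
  assumes "n \<ge> 1" and "m \<ge> 1"
    and P: "\<And>i. i < n \<Longrightarrow> prob_space (p i)"
    and "\<And>i y y'. i < n \<Longrightarrow> 0 \<le> loss i y y' \<and> loss i y y' \<le> 1"
    and "\<And>i. i < n \<Longrightarrow> (\<lambda>(x, y). loss i y (fs i x)) \<in> borel_measurable (p i)"
    and "0 < w"
  shows "measure (sample_measure n m p)
           {S \<in> space (sample_measure n m p).
              mt_risk n p loss fs > mt_emp_risk n m loss S fs + sqrt (ln (1 / w) / (2 * real m * real n))}
         \<le> w"
proof (cases "w \<le> 1")
  case True
  define \<epsilon> where "\<epsilon> = sqrt (ln (1 / w) / (2 * real m * real n))"
  have ln: "ln (1 / w) \<ge> 0"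
    using assms(6) True by simp
  then have "\<epsilon> \<ge> 0"
    by (simp add: \<epsilon>_def)
  have "\<epsilon>\<^sup>2 = ln (1 / w) / (2 * real m * real n)"
    unfolding \<epsilon>_def using ln by (intro real_sqrt_pow2) simp
  then have "-2 * real m * real n * \<epsilon>\<^sup>2 = ln w"
    using assms(1,2,6) by (simp add: ln_div)
  then show ?thesis
    using prob_mt_risk_gt_emp_risk_le[OF assms(1-5) \<open>\<epsilon> \<ge> 0\<close>] assms(6) by (simp add: \<epsilon>_def)
next
  case False
  interpret prob_space "sample_measure n m p"
    using P by (rule prob_space_sample_measure)
  show ?thesis
    using False by (intro order_trans[OF prob_le_1]) simp
qed

lemma mt_occam_bound:
  fixes fs :: "'a \<Rightarrow> nat \<Rightarrow> 'x \<Rightarrow> 'y" and L :: "'a \<Rightarrow> nat"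
  assumes "n \<ge> 1" and "m \<ge> 1"
    and P: "\<And>i. i < n \<Longrightarrow> prob_space (p i)"
    and "\<And>i y y'. i < n \<Longrightarrow> 0 \<le> loss i y y' \<and> loss i y y' \<le> 1"
    and meas: "\<And>a i. a \<in> I \<Longrightarrow> i < n \<Longrightarrow> (\<lambda>(x, y). loss i y (fs a i x)) \<in> borel_measurable (p i)"
    and L: "is_prefix_free_length L I" and "0 < \<delta>"
  shows "\<exists>A \<in> sets (sample_measure n m p). measure (sample_measure n m p) A \<ge> 1 - \<delta> \<and>
           (\<forall>S \<in> A. \<forall>a \<in> I. mt_risk n p loss (fs a) \<le> mt_emp_risk n m loss S (fs a) +
              sqrt ((real (L a) * ln 2 + ln (1 / \<delta>)) / (2 * real m * real n)))"
proof -
  interpret prob_space "sample_measure n m p"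
    using P by (rule prob_space_sample_measure)
  define w where "w a = (1/2) ^ L a * \<delta>" for a
  define Bad where "Bad a = {S \<in> space (sample_measure n m p).
    mt_risk n p loss (fs a) > mt_emp_risk n m loss S (fs a) + sqrt (ln (1 / w a) / (2 * real m * real n))}" for a
  have "\<exists>A \<in> events. prob A \<ge> 1 - \<delta> \<and> (\<forall>S \<in> A. \<forall>a \<in> I. S \<notin> Bad a)"
  proof (rule prefix_free_union_bound[OF L])
    fix a assume a: "a \<in> I"
    have "(\<lambda>S. mt_emp_risk n m loss S (fs a)) \<in> borel_measurable (sample_measure n m p)"
      using meas[OF a] by (rule borel_measurable_mt_emp_risk)
    then show "Bad a \<in> events"
      unfolding Bad_def by measurable
    have "0 < w a"
      using assms(7) by (simp add: w_def)
    with assms(1-4) meas[OF a] show "prob (Bad a) \<le> (1/2) ^ L a * \<delta>"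
      unfolding Bad_def w_def[symmetric] by (rule prob_mt_risk_gt_emp_risk_sqrt_le)
  qed (use assms(7) in simp)
  then obtain A where A: "A \<in> events" "prob A \<ge> 1 - \<delta>" and good: "\<forall>S \<in> A. \<forall>a \<in> I. S \<notin> Bad a"
    by blast
  have "ln (1 / w a) = real (L a) * ln 2 + ln (1 / \<delta>)" for a
    using assms(7) by (simp add: w_def ln_div ln_mult ln_realpow)
  with good sets.sets_into_space[OF A(1)] have "\<forall>S \<in> A. \<forall>a \<in> I. mt_risk n p loss (fs a) \<le>
      mt_emp_risk n m loss S (fs a) + sqrt ((real (L a) * ln 2 + ln (1 / \<delta>)) / (2 * real m * real n))"
    unfolding Bad_def by (auto simp: not_less)
  with A show ?thesis
    by blast
qed

theorem theorem2:
  fixes F :: "('x \<Rightarrow> 'y) set"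
    and n m :: nat
    and p :: "nat \<Rightarrow> ('x \<times> 'y) measure"
    and loss :: "nat \<Rightarrow> 'y \<Rightarrow> 'y \<Rightarrow> real"
    and \<E> :: "'e set"
    and l :: "'e \<Rightarrow> nat"
    and lE :: "'e \<Rightarrow> ('x \<Rightarrow> 'y) list \<Rightarrow> nat"
    and \<delta> :: real
  assumes "n \<ge> 1" and "m \<ge> 1"
    and "\<And>i. i < n \<Longrightarrow> prob_space (p i)"
    and "\<And>i y y'. i < n \<Longrightarrow> 0 \<le> loss i y y' \<and> loss i y y' \<le> 1"
    and "\<And>i f. i < n \<Longrightarrow> f \<in> F \<Longrightarrow>
           (\<lambda>(x, y). loss i y (f x)) \<in> borel_measurable (p i)"
    and "is_prefix_free_length l \<E>"
    and "\<And>E. E \<in> \<E> \<Longrightarrow> is_prefix_free_length (lE E) (tuples_of F)"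
    and "\<delta> > 0"
  shows "\<exists>A \<in> sets (sample_measure n m p).
           measure (sample_measure n m p) A \<ge> 1 - \<delta> \<and>
           (\<forall>S \<in> A. \<forall>E \<in> \<E>. \<forall>fs. (\<forall>i<n. fs i \<in> F) \<longrightarrow>
              mt_risk n p loss fs \<le>
                mt_emp_risk n m loss S fs +
                sqrt (((real (l E) + real (lE E (map fs [0..<n]))) * ln 2 + ln (1 / \<delta>))
                      / (2 * real m * real n)))"
proof -
  define T where "T = {fs \<in> tuples_of F. length fs = n}"
  define code_length where "code_length = (\<lambda>(E, fs). l E + lE E fs)"
  have "is_prefix_free_length code_length (SIGMA E:\<E>. T)"
    unfolding code_length_def
  proof (rule is_prefix_free_length_Sigma[OF assms(6)])
    show "is_prefix_free_length (lE E) T" if "E \<in> \<E>" for E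
      using assms(7)[OF that] by (rule is_prefix_free_length_subset) (simp add: T_def)
  qed
  moreover have "(\<lambda>(x, y). loss i y ((fs ! i) x)) \<in> borel_measurable (p i)" if "fs \<in> T" and "i < n" for fs i
  proof (rule assms(5)[OF \<open>i < n\<close>])
    show "fs ! i \<in> F"
      using that nth_mem[of i fs] by (auto simp: T_def tuples_of_def)
  qed
  ultimately obtain A where A: "A \<in> sets (sample_measure n m p)" "measure (sample_measure n m p) A \<ge> 1 - \<delta>"
    and bound: "\<forall>S \<in> A. \<forall>(E, fs) \<in> SIGMA E:\<E>. T. mt_risk n p loss ((!) fs) \<le> mt_emp_risk n m loss S ((!) fs) +
      sqrt ((real (code_length (E, fs)) * ln 2 + ln (1 / \<delta>)) / (2 * real m * real n))"
    using mt_occam_bound[of n m p loss "SIGMA E:\<E>. T" "\<lambda>(E, fs). (!) fs" code_length \<delta>] assms(1-4,8)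
    by (auto simp: case_prod_beta)
  show ?thesis
  proof (intro bexI[OF _ A(1)] conjI ballI allI impI)
    fix S E fs
    assume "S \<in> A" and "E \<in> \<E>" and "\<forall>i<n. fs i \<in> F"
    then have "(E, map fs [0..<n]) \<in> (SIGMA E:\<E>. T)"
      using assms(1) by (auto simp: T_def tuples_of_def)
    with bound \<open>S \<in> A\<close> show "mt_risk n p loss fs \<le> mt_emp_risk n m loss S fs +
        sqrt (((real (l E) + real (lE E (map fs [0..<n]))) * ln 2 + ln (1 / \<delta>)) / (2 * real m * real n))"
      using mt_risk_cong[of n "(!) (map fs [0..<n])" fs p loss]
        mt_emp_risk_cong[of n "(!) (map fs [0..<n])" fs m loss S]
      by (fastforce simp: code_length_def)
  qed (use A(2) in simp)
qed

end
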